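(* Let $\mathcal{B}$ be a prime Banach algebra over $\mathbb{R}$ or $\mathbb{C}$, and let $\mathcal{H}_1,\mathcal{H}_2$ be non-empty open subsets of $\mathcal{B}$. Suppose $\mathcal{B}$ admits a continuous automorphism $f$ such that for every $(x,y)\in\mathcal{H}_1\times\mathcal{H}_2$ there exist positive integers $p=p(x,y)$, $q=q(x,y)$ with $$f(x^{p}\circ y^{q})-[x^{p},y^{q}]\in Z(\mathcal{B}).$$ Then $\mathcal{B}$ is commutative.
   Context: $Z(\mathcal{B})$ denotes the center of $\mathcal{B}$. For $x,y\in\mathcal{B}$, $x\circ y=xy+yx$ and $[x,y]=xy-yx$. $\mathcal{B}$ is prime if $x\mathcal{B}y=\{0\}$ implies $x=0$ or $y=0$. An automorphism of $\mathcal{B}$ is a bijective map $f:\mathcal{B}\to\mathcal{B}$ with $f(x+y)=f(x)+f(y)$ and $f(xy)=f(x)f(y)$ for all $x,y$. *)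

theory Defs
  imports "HOL-Analysis.Analysis"
begin

(* Positive powers x^n (n >= 1) in a possibly non-unital ring; the value at n = 0 is a dummy
   and is never used (the theorem only uses exponents p, q > 0). *)
fun ppow :: "'a::times \<Rightarrow> nat \<Rightarrow> 'a" where
  "ppow x 0 = x"
| "ppow x (Suc 0) = x"
| "ppow x (Suc (Suc n)) = ppow x (Suc n) * x"

definition jordan_prod :: "'a::ring \<Rightarrow> 'a \<Rightarrow> 'a" where
  "jordan_prod x y = x * y + y * x"

definition commutator :: "'a::ring \<Rightarrow> 'a \<Rightarrow> 'a" where
  "commutator x y = x * y - y * x"

definition center :: "'a::ring set" where
  "center = {z. \<forall>x. z * x = x * z}"

definition prime_ring :: "'a::ring itself \<Rightarrow> bool" where
  "prime_ring _ \<longleftrightarrow> (\<forall>x y::'a. (\<forall>b. x * b * y = 0) \<longrightarrow> x = 0 \<or> y = 0)"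

definition ring_automorphism :: "('a::ring \<Rightarrow> 'a) \<Rightarrow> bool" where
  "ring_automorphism f \<longleftrightarrow> bij f \<and> (\<forall>x y. f (x + y) = f x + f y) \<and> (\<forall>x y. f (x * y) = f x * f y)"

end

theory Submission
  imports Defs
begin

text \<open>
  By the Baire category theorem the exponents \<open>p, q\<close> can be fixed on a product \<open>A \<times> B\<close> of
  open sets. For fixed \<open>y\<close> the map \<open>u \<mapsto> f (u \<circ> y\<^sup>q) - [u, y\<^sup>q]\<close> is linear (an additive continuous
  map is real-linear), and along a line \<open>a + t v\<close> its value at \<open>(a + t v)\<^sup>p\<close> is a polynomial in \<open>t\<close>.
  A polynomial whose values on an interval lie in a subspace has all its coefficients there, so
  the condition spreads from \<open>A\<close> to the whole algebra; putting \<open>x = y\<close> gives \<open>f (y\<^sup>n) \<in> Z\<close> with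
  \<open>n = p + q\<close>, which spreads from \<open>B\<close> in the same way. As \<open>f\<close> is onto, all \<open>n\<close>-th powers are central.

  In a prime real algebra this forces commutativity. If some \<open>z = w\<^sup>n\<close> is nonzero, the linear
  coefficient \<open>n z\<^sup>n\<^sup>-\<^sup>1 v\<close> of \<open>(z + t v)\<^sup>n\<close> is central for every \<open>v\<close>, and the nonzero central element
  \<open>z\<^sup>n\<^sup>-\<^sup>1\<close> annihilates all commutators. Otherwise the algebra is nil of bounded index, and the linear
  coefficient of \<open>(a + t b)\<^sup>n\<close> shows \<open>a\<^sup>n\<^sup>-\<^sup>1 b a\<^sup>n\<^sup>-\<^sup>1 = 0\<close>, so primeness lowers the index down to 1.
\<close>

lemma ppow_Suc: "0 < m \<Longrightarrow> ppow x (Suc m) = ppow x m * x"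
  by (cases m) auto

lemma ppow_add:
  fixes x :: "'a::semigroup_mult"
  assumes "0 < m" "0 < k"
  shows "ppow x (m + k) = ppow x m * ppow x k"
  using assms(2)
proof (induction k rule: nat_induct_non_zero)
  case 1
  then show ?case using assms(1) by (simp add: ppow_Suc)
next
  case (Suc k)
  then show ?case using assms(1) by (simp add: ppow_Suc mult.assoc)
qed

lemma ppow_mult_annihilator:
  fixes u a :: "'a::ring"
  assumes "u * a = 0"
  shows "u * ppow a m = 0"
  using assms by (induction a m rule: ppow.induct) (simp_all add: mult.assoc[symmetric])

lemma multiplicative_ppow: "(\<And>x y. f (x * y) = f x * f y) \<Longrightarrow> f (ppow x n) = ppow (f x) n"
  by (induction x n rule: ppow.induct) auto

lemma continuous_on_ppow [continuous_intros]:
  fixes g :: "'b::topological_space \<Rightarrow> 'a::real_normed_algebra"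
  shows "continuous_on S g \<Longrightarrow> continuous_on S (\<lambda>x. ppow (g x) n)"
proof (induction n)
  case (Suc n)
  then show ?case by (cases n) (auto intro: continuous_on_mult)
qed simp

lemma subspace_center: "subspace (center :: 'a::real_algebra set)"
  unfolding subspace_def center_def by (simp add: distrib_left distrib_right)

lemma center_mult:
  assumes "a \<in> center" "b \<in> center"
  shows "a * b \<in> center"
proof -
  have "a * b * x = x * (a * b)" for x
  proof -
    from assms have "a * x = x * a" "b * x = x * b"
      by (simp_all add: center_def)
    then show ?thesis by (metis mult.assoc)
  qed
  then show ?thesis by (simp add: center_def)
qed

lemma center_ppow: "a \<in> center \<Longrightarrow> ppow a n \<in> center"
  by (induction a n rule: ppow.induct) (auto intro: center_mult)

lemma closed_center: "closed (center :: 'a::real_normed_algebra set)"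
proof -
  have "center = (\<Inter>x. {z::'a. z * x = x * z})"
    by (auto simp: center_def)
  also have "closed \<dots>"
    by (intro closed_INT ballI closed_Collect_eq continuous_intros)
  finally show ?thesis .
qed

lemma subspace_scaleR_iff:
  assumes "subspace S" "r \<noteq> 0"
  shows "r *\<^sub>R x \<in> S \<longleftrightarrow> x \<in> S"
  using subspace_mul[OF assms(1), of "r *\<^sub>R x" "inverse r"] subspace_mul[OF assms(1), of x r] assms(2)
  by auto

lemma sum_powers_mult_add_scaleR:
  fixes c :: "nat \<Rightarrow> 'a::real_algebra"
  shows "(\<Sum>k\<le>m. t^k *\<^sub>R c k) * (a + t *\<^sub>R b) =
    (\<Sum>k\<le>Suc m. t^k *\<^sub>R ((if k \<le> m then c k * a else 0) + (if k = 0 then 0 else c (k - 1) * b)))"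
proof -
  have "(\<Sum>k\<le>m. t^k *\<^sub>R c k) * (a + t *\<^sub>R b) =
      (\<Sum>k\<le>m. t^k *\<^sub>R (c k * a)) + (\<Sum>k\<le>m. t^Suc k *\<^sub>R (c k * b))"
    by (simp add: distrib_left sum_distrib_right scaleR_sum_right mult.commute)
  also have "(\<Sum>k\<le>m. t^k *\<^sub>R (c k * a)) = (\<Sum>k\<le>Suc m. t^k *\<^sub>R (if k \<le> m then c k * a else 0))"
    by simp
  also have "(\<Sum>k\<le>m. t^Suc k *\<^sub>R (c k * b)) = (\<Sum>k\<le>Suc m. t^k *\<^sub>R (if k = 0 then 0 else c (k - 1) * b))"
    by (simp only: sum.atMost_Suc_shift) simp
  finally show ?thesis
    by (simp add: sum.distrib[symmetric] scaleR_add_right)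
qed

lemma sum_powers_halving:
  fixes c :: "nat \<Rightarrow> 'a::real_vector"
  shows "(\<Sum>k\<le>n. t^k *\<^sub>R (((2::real)^Suc n / 2^k - 1) *\<^sub>R c k)) =
    2^Suc n *\<^sub>R (\<Sum>k\<le>Suc n. (t/2)^k *\<^sub>R c k) - (\<Sum>k\<le>Suc n. t^k *\<^sub>R c k)"
proof -
  have "2^Suc n *\<^sub>R (\<Sum>k\<le>Suc n. (t/2)^k *\<^sub>R c k) - (\<Sum>k\<le>Suc n. t^k *\<^sub>R c k) =
      (\<Sum>k\<le>Suc n. (2^Suc n * (t/2)^k - t^k) *\<^sub>R c k)"
    by (simp only: scaleR_sum_right scaleR_scaleR sum_subtractf scaleR_diff_left)
  also have "\<dots> = (\<Sum>k\<le>Suc n. t^k *\<^sub>R (((2::real)^Suc n / 2^k - 1) *\<^sub>R c k))"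
    by (intro sum.cong) (simp_all add: power_divide field_simps)
  finally show ?thesis
    by simp
qed

lemma subspace_poly_coeffs:
  fixes c :: "nat \<Rightarrow> 'a::real_vector"
  assumes S: "subspace S" and "0 < d"
    and "\<And>t. 0 < t \<Longrightarrow> t < d \<Longrightarrow> (\<Sum>k\<le>n. t^k *\<^sub>R c k) \<in> S"
    and "k \<le> n"
  shows "c k \<in> S"
  using assms(3,4)
proof (induction n arbitrary: c k)
  case 0
  have "(\<Sum>k\<le>0. (d/2)^k *\<^sub>R c k) \<in> S"
    using \<open>0 < d\<close> by (intro "0.prems"(1)) auto
  then show ?case using "0.prems"(2) by simp
next
  case (Suc n)
  define s where "s k = (2::real)^Suc n / 2^k - 1" for k
  have low: "c k \<in> S" if "k \<le> n" for k
  proof -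
    have "s k *\<^sub>R c k \<in> S"
    proof (rule Suc.IH[OF _ that])
      fix t :: real assume t: "0 < t" "t < d"
      have "(\<Sum>k\<le>n. t^k *\<^sub>R (s k *\<^sub>R c k)) =
          2^Suc n *\<^sub>R (\<Sum>k\<le>Suc n. (t/2)^k *\<^sub>R c k) - (\<Sum>k\<le>Suc n. t^k *\<^sub>R c k)"
        unfolding s_def by (rule sum_powers_halving)
      also have "\<dots> \<in> S"
        using t by (intro subspace_diff[OF S] subspace_mul[OF S] Suc.prems) auto
      finally show "(\<Sum>k\<le>n. t^k *\<^sub>R (s k *\<^sub>R c k)) \<in> S" .
    qed
    moreover have "(2::real)^k < 2^Suc n"
      using that by (intro power_strict_increasing) auto
    then have "s k \<noteq> 0" by (simp add: s_def)
    ultimately show ?thesis using subspace_scaleR_iff[OF S] by blast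
  qed
  have "(d/2)^Suc n *\<^sub>R c (Suc n) = (\<Sum>k\<le>Suc n. (d/2)^k *\<^sub>R c k) - (\<Sum>k\<le>n. (d/2)^k *\<^sub>R c k)"
    by simp
  also have "\<dots> \<in> S"
    using \<open>0 < d\<close> low
    by (intro subspace_diff[OF S] subspace_sum[OF S] subspace_mul[OF S] Suc.prems) auto
  finally have "c (Suc n) \<in> S"
    using subspace_scaleR_iff[OF S] \<open>0 < d\<close> by simp
  then show ?case using low Suc.prems(2) le_Suc_eq by auto
qed

text \<open>The coefficient of \<open>t\<close> in \<open>(a + t b)\<^sup>m\<close>, i.e. \<open>\<Sum>\<^sub>i\<^sub>+\<^sub>j\<^sub>=\<^sub>m\<^sub>-\<^sub>1 a\<^sup>i b a\<^sup>j\<close>; the value at \<open>m = 0\<close> is a dummy.\<close>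

fun ppow_deriv :: "'a::ring \<Rightarrow> 'a \<Rightarrow> nat \<Rightarrow> 'a" where
  "ppow_deriv a b 0 = b"
| "ppow_deriv a b (Suc 0) = b"
| "ppow_deriv a b (Suc (Suc m)) = ppow_deriv a b (Suc m) * a + ppow a (Suc m) * b"

lemma ppow_add_scaleR_expansion:
  fixes a b :: "'a::real_algebra"
  assumes "0 < m"
  obtains c where "\<And>t. ppow (a + t *\<^sub>R b) m = (\<Sum>k\<le>m. t^k *\<^sub>R c k)"
    and "c 0 = ppow a m" and "c 1 = ppow_deriv a b m" and "c m = ppow b m"
proof -
  have "\<exists>c. (\<forall>t. ppow (a + t *\<^sub>R b) m = (\<Sum>k\<le>m. t^k *\<^sub>R c k))
      \<and> c 0 = ppow a m \<and> c 1 = ppow_deriv a b m \<and> c m = ppow b m"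
    using assms
  proof (induction m rule: nat_induct_non_zero)
    case 1
    show ?case by (rule exI[of _ "\<lambda>k. if k = 0 then a else b"]) simp
  next
    case (Suc m)
    then obtain c where c: "\<And>t. ppow (a + t *\<^sub>R b) m = (\<Sum>k\<le>m. t^k *\<^sub>R c k)"
      "c 0 = ppow a m" "c 1 = ppow_deriv a b m" "c m = ppow b m"
      by blast
    define c' where
      "c' k = (if k \<le> m then c k * a else 0) + (if k = 0 then 0 else c (k - 1) * b)" for k
    have "ppow (a + t *\<^sub>R b) (Suc m) = (\<Sum>k\<le>Suc m. t^k *\<^sub>R c' k)" for t
      using Suc.hyps by (simp add: ppow_Suc c(1) sum_powers_mult_add_scaleR c'_def)
    moreover have "c' 1 = ppow_deriv a b (Suc m)"
      using Suc.hyps c(2,3) by (cases m) (simp_all add: c'_def)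
    ultimately show ?case
      using Suc.hyps c(2,4) by (intro exI[of _ c']) (simp add: c'_def ppow_Suc)
  qed
  then show ?thesis using that by blast
qed

lemma linear_ppow_coeffs_in_subspace:
  fixes L :: "'a::real_algebra \<Rightarrow> 'b::real_vector"
  assumes L: "linear L" and S: "subspace S" and "0 < m" "0 < d"
    and line: "\<And>t. 0 < t \<Longrightarrow> t < d \<Longrightarrow> L (ppow (a + t *\<^sub>R b) m) \<in> S"
  shows "L (ppow_deriv a b m) \<in> S" and "L (ppow b m) \<in> S"
proof -
  obtain c where c: "\<And>t. ppow (a + t *\<^sub>R b) m = (\<Sum>k\<le>m. t^k *\<^sub>R c k)"
    "c 1 = ppow_deriv a b m" "c m = ppow b m"
    using ppow_add_scaleR_expansion[OF \<open>0 < m\<close>] by metis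
  have "L (c k) \<in> S" if "k \<le> m" for k
  proof (rule subspace_poly_coeffs[OF S \<open>0 < d\<close> _ that])
    fix t :: real assume "0 < t" "t < d"
    then show "(\<Sum>k\<le>m. t^k *\<^sub>R L (c k)) \<in> S"
      using line c(1) by (simp add: linear_sum[OF L] linear_scale[OF L])
  qed
  then show "L (ppow_deriv a b m) \<in> S" and "L (ppow b m) \<in> S"
    using c(2,3) \<open>0 < m\<close> by (metis One_nat_def Suc_leI, metis order_refl)
qed

lemma ppow_deriv_central:
  fixes z :: "'a::real_algebra"
  assumes "z \<in> center" and "2 \<le> m"
  shows "ppow_deriv z x m = of_nat m *\<^sub>R (ppow z (m - 1) * x)"
  using assms(2)
proof (induction m rule: nat_induct_at_least)
  case base
  have "x * z = z * x" using assms(1) by (simp add: center_def)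
  then show ?case by (simp add: numeral_2_eq_2 scaleR_2)
next
  case (Suc m)
  obtain k where k: "m = Suc k" using Suc.hyps by (cases m) auto
  have "ppow z (m - 1) * x * z = ppow z m * x"
    using assms(1) k ppow_Suc[of k z] Suc.hyps by (simp add: center_def mult.assoc)
  then have "ppow_deriv z x (Suc m) = of_nat m *\<^sub>R (ppow z m * x) + ppow z m * x"
    using Suc.IH Suc.hyps k by (cases k) auto
  then show ?case by (simp add: scaleR_add_left)
qed

lemma ppow_deriv_left_annihilator:
  fixes u a :: "'a::ring"
  assumes "u * a = 0" and "2 \<le> m"
  shows "u * ppow_deriv a b m = u * b * ppow a (m - 1)"
  using assms(2)
proof (induction m rule: nat_induct_at_least)
  case base
  then show ?case using assms(1) by (simp add: numeral_2_eq_2 distrib_left mult.assoc[symmetric])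
next
  case (Suc m)
  obtain k where "m = Suc k" using Suc.hyps by (cases m) auto
  then show ?case
    using Suc ppow_mult_annihilator[OF assms(1), of m]
    by (simp add: distrib_left mult.assoc[symmetric] ppow_Suc)
qed

lemma prime_ring_central_mult_eq_0:
  fixes z :: "'a::ring"
  assumes "prime_ring TYPE('a)" and "z \<in> center" and "z * w = 0"
  shows "z = 0 \<or> w = 0"
proof -
  have "z * b * w = b * (z * w)" for b
    using assms(2) by (simp add: center_def mult.assoc)
  then show ?thesis
    using assms(1,3) unfolding prime_ring_def by simp
qed

lemma prime_ring_central_ppow_neq_0:
  fixes z :: "'a::ring"
  assumes "prime_ring TYPE('a)" and "z \<in> center" and "z \<noteq> 0"
  shows "ppow z n \<noteq> 0"
proof (induction n)
  case (Suc n)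
  then show ?case
    using assms prime_ring_central_mult_eq_0[OF assms(1) center_ppow[OF assms(2)], of n z]
    by (cases n) auto
qed (use assms in simp)

lemma prime_ring_nil_trivial:
  fixes x :: "'a::real_algebra"
  assumes prime: "prime_ring TYPE('a)" and "0 < n" and "\<forall>y::'a. ppow y n = 0"
  shows "x = 0"
  using assms(2,3)
proof (induction n rule: nat_induct_non_zero)
  case 1
  then show ?case by simp
next
  case (Suc n)
  have "ppow a n = 0" for a :: 'a
  proof -
    have "ppow a n * b * ppow a n = 0" for b :: 'a
    proof -
      have "ppow_deriv a b (Suc n) \<in> {0}"
        by (rule linear_ppow_coeffs_in_subspace(1)[OF linear_ident subspace_single_0 zero_less_Suc zero_less_one])
          (simp add: Suc.prems)
      moreover have "ppow a n * a = 0"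
        using Suc.hyps Suc.prems ppow_Suc[of n a] by simp
      ultimately show ?thesis
        using ppow_deriv_left_annihilator[of "ppow a n" a "Suc n" b] Suc.hyps by simp
    qed
    then show ?thesis using prime unfolding prime_ring_def by blast
  qed
  then show ?case using Suc.IH by blast
qed

lemma prime_ring_commutative_if_central_multiples:
  fixes u x y :: "'a::ring"
  assumes prime: "prime_ring TYPE('a)" and "u \<in> center" "u \<noteq> 0"
    and "\<And>v. u * v \<in> center"
  shows "x * y = y * x"
proof -
  have "u * (x * y) = (u * x) * y" by (simp add: mult.assoc)
  also have "\<dots> = y * (u * x)" using assms(4)[of x] by (simp add: center_def)
  also have "\<dots> = (y * u) * x" by (simp add: mult.assoc)
  also have "\<dots> = u * (y * x)" using assms(2) by (simp add: center_def mult.assoc)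
  finally have "u * (x * y - y * x) = 0"
    by (simp add: right_diff_distrib)
  then have "x * y - y * x = 0"
    using prime_ring_central_mult_eq_0[OF prime assms(2)] assms(3) by blast
  then show ?thesis by simp
qed

lemma prime_ring_commutative_if_ppow_central:
  fixes x y :: "'a::real_algebra"
  assumes prime: "prime_ring TYPE('a)" and "2 \<le> n" and central: "\<And>v::'a. ppow v n \<in> center"
  shows "x * y = y * x"
proof (cases "\<forall>w::'a. ppow w n = 0")
  case True
  then have "x = 0"
    using prime_ring_nil_trivial[OF prime, of n] \<open>2 \<le> n\<close> by simp
  then show ?thesis by simp
next
  case False
  then obtain w :: 'a where "ppow w n \<noteq> 0" by blast
  define z where "z = ppow w n"
  have z: "z \<in> center" "z \<noteq> 0"
    using central \<open>ppow w n \<noteq> 0\<close> by (simp_all add: z_def)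
  have "ppow z (n - 1) * v \<in> center" for v
  proof -
    have "ppow_deriv z v n \<in> center"
      using \<open>2 \<le> n\<close> central
      by (intro linear_ppow_coeffs_in_subspace(1)[OF linear_ident subspace_center _ zero_less_one]) auto
    then show ?thesis
      using ppow_deriv_central[OF z(1) \<open>2 \<le> n\<close>, of v] \<open>2 \<le> n\<close>
        subspace_scaleR_iff[OF subspace_center, of "real n"]
      by auto
  qed
  then show ?thesis
    using prime_ring_commutative_if_central_multiples[OF prime center_ppow[OF z(1)]]
      prime_ring_central_ppow_neq_0[OF prime z] by blast
qed

lemma additive_continuous_imp_linear:
  fixes f :: "'a::real_normed_vector \<Rightarrow> 'b::real_normed_vector"
  assumes add: "\<And>x y. f (x + y) = f x + f y" and cont: "continuous_on UNIV f"
  shows "linear f"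
proof (rule linearI)
  show "f (x + y) = f x + f y" for x y by (rule add)
  interpret additive f by (rule additive.intro) (rule add)
  fix r :: real and x :: 'a
  have int: "f (of_int i *\<^sub>R y) = of_int i *\<^sub>R f y" for i :: int and y
    by (induction i rule: int_induct[of _ 0]) (simp_all add: add diff zero scaleR_add_left scaleR_diff_left)
  have "f (s *\<^sub>R x) = s *\<^sub>R f x" if "s \<in> \<rat>" for s
  proof -
    obtain i j where "0 < j" "s = of_int i / of_int j"
      using \<open>s \<in> \<rat>\<close> by (rule Rats_cases')
    then have "of_int j *\<^sub>R (f (s *\<^sub>R x) - s *\<^sub>R f x) = 0"
      using int[of j "s *\<^sub>R x"] int[of i] by (simp add: scaleR_diff_right)
    then show ?thesis using \<open>0 < j\<close> by simp
  qed
  moreover have "closed {s::real. f (s *\<^sub>R x) = s *\<^sub>R f x}"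
    by (intro closed_Collect_eq continuous_intros continuous_on_compose2[OF cont]) auto
  ultimately have "closure \<rat> \<subseteq> {s::real. f (s *\<^sub>R x) = s *\<^sub>R f x}"
    by (intro closure_minimal) auto
  then show "f (r *\<^sub>R x) = r *\<^sub>R f x"
    by (auto simp: Rats_closure_real)
qed

lemma linear_ppow_in_subspace_from_open:
  fixes L :: "'a::real_normed_algebra \<Rightarrow> 'b::real_vector"
  assumes L: "linear L" and S: "subspace S" and "open A" "a \<in> A" "0 < m"
    and on_A: "\<And>x. x \<in> A \<Longrightarrow> L (ppow x m) \<in> S"
  shows "L (ppow x m) \<in> S"
proof -
  obtain e where "0 < e" and ball: "ball a e \<subseteq> A"
    using \<open>open A\<close> \<open>a \<in> A\<close> open_contains_ball by blast
  have "0 < norm x + 1"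
    using norm_ge_zero[of x] by linarith
  define d where "d = e / (norm x + 1)"
  have "0 < d"
    using \<open>0 < e\<close> \<open>0 < norm x + 1\<close> by (simp add: d_def)
  have line: "a + t *\<^sub>R x \<in> A" if "0 < t" "t < d" for t
  proof -
    have "norm (t *\<^sub>R x) \<le> t * (norm x + 1)"
      using \<open>0 < t\<close> by (simp add: algebra_simps)
    also have "\<dots> < d * (norm x + 1)"
      using \<open>t < d\<close> \<open>0 < norm x + 1\<close> by (rule mult_strict_right_mono)
    also have "\<dots> = e"
      using \<open>0 < norm x + 1\<close> by (simp add: d_def)
    finally show ?thesis
      using ball by (auto simp: dist_norm)
  qed
  show ?thesis
    by (rule linear_ppow_coeffs_in_subspace(2)[OF L S \<open>0 < m\<close> \<open>0 < d\<close>, of a]) (simp add: on_A line)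
qed

lemma Baire_continuous_cover:
  fixes W :: "'a::complete_space set" and g :: "'i \<Rightarrow> 'a \<Rightarrow> 'b::topological_space"
  assumes "open W" "W \<noteq> {}" "countable I" "closed S"
    and cont: "\<And>i. i \<in> I \<Longrightarrow> continuous_on UNIV (g i)"
    and cover: "\<And>z. z \<in> W \<Longrightarrow> \<exists>i\<in>I. g i z \<in> S"
  obtains i U where "i \<in> I" "open U" "U \<noteq> {}" "\<And>z. z \<in> U \<Longrightarrow> g i z \<in> S"
proof -
  define X where "X = top_of_set W"
  define \<G> where "\<G> = (\<lambda>i. W \<inter> g i -` S) ` I"
  have "completely_metrizable_space X"
    unfolding X_def
    by (rule completely_metrizable_space_openin[OF completely_metrizable_space_euclidean])
      (simp add: \<open>open W\<close> flip: open_openin)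
  moreover have "countable \<G>"
    using \<open>countable I\<close> by (simp add: \<G>_def)
  moreover have "\<Union>\<G> = W"
    using cover by (auto simp: \<G>_def)
  then have "X interior_of \<Union>\<G> \<noteq> {}"
    using \<open>W \<noteq> {}\<close> interior_of_topspace[of X] by (simp add: X_def)
  ultimately obtain T where "T \<in> \<G>" and T: "\<not> (closedin X T \<and> X interior_of T = {})"
    using Baire_category_alt by blast
  then obtain i where "i \<in> I" and Ti: "T = W \<inter> g i -` S"
    by (auto simp: \<G>_def)
  have "closed (g i -` S)"
    using cont[OF \<open>i \<in> I\<close>] \<open>closed S\<close> continuous_on_closed_vimage[OF closed_UNIV] by auto
  then have "closedin X T"
    unfolding X_def Ti by (simp add: closedin_closed_Int Int_commute)
  then have "X interior_of T \<noteq> {}" using T by blast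
  moreover have "open (X interior_of T)"
    using openin_interior_of[of X T] \<open>open W\<close> unfolding X_def by (rule openin_open_trans)
  moreover have "g i z \<in> S" if "z \<in> X interior_of T" for z
    using that interior_of_subset[of X T] Ti by auto
  ultimately show ?thesis using that \<open>i \<in> I\<close> by blast
qed

lemma Baire_open_box:
  fixes H1 :: "'a::complete_space set" and H2 :: "'b::complete_space set"
    and g :: "'i \<Rightarrow> 'a \<Rightarrow> 'b \<Rightarrow> 'c::topological_space"
  assumes "open H1" "H1 \<noteq> {}" "open H2" "H2 \<noteq> {}" "countable I" "closed S"
    and cont: "\<And>i. i \<in> I \<Longrightarrow> continuous_on UNIV (\<lambda>(x, y). g i x y)"
    and cover: "\<And>x y. x \<in> H1 \<Longrightarrow> y \<in> H2 \<Longrightarrow> \<exists>i\<in>I. g i x y \<in> S"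
  obtains i A a B b where "i \<in> I" "open A" "a \<in> A" "open B" "b \<in> B"
    and "\<And>x y. x \<in> A \<Longrightarrow> y \<in> B \<Longrightarrow> g i x y \<in> S"
proof -
  have nonempty: "H1 \<times> H2 \<noteq> {}"
    using assms(2,4) by simp
  have cover': "\<exists>i\<in>I. (\<lambda>(x, y). g i x y) z \<in> S" if "z \<in> H1 \<times> H2" for z
    using cover that by auto
  obtain i U where "i \<in> I" "open U" "U \<noteq> {}" and U: "\<And>z. z \<in> U \<Longrightarrow> (\<lambda>(x, y). g i x y) z \<in> S"
    using Baire_continuous_cover[OF open_Times[OF assms(1,3)] nonempty assms(5,6) cont cover'] by blast
  moreover obtain z where "z \<in> U"
    using \<open>U \<noteq> {}\<close> by blast
  moreover obtain A B where "open A" "open B" "z \<in> A \<times> B" "A \<times> B \<subseteq> U"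
    using open_prod_elim[OF \<open>open U\<close> \<open>z \<in> U\<close>] .
  ultimately show ?thesis
    using that[of i A "fst z" B "snd z"] by (auto simp: mem_Times_iff)
qed

lemma ppow_central_from_open_box:
  fixes f :: "'a::real_normed_algebra \<Rightarrow> 'a"
  assumes f: "linear f" and A: "open A" "a \<in> A" and B: "open B" "b \<in> B" and "0 < p" "0 < q"
    and box: "\<And>x y. x \<in> A \<Longrightarrow> y \<in> B \<Longrightarrow>
      f (jordan_prod (ppow x p) (ppow y q)) - commutator (ppow x p) (ppow y q) \<in> center"
  shows "f (ppow y (p + q)) \<in> center"
proof -
  have "f (ppow y (p + q)) \<in> center" if "y \<in> B" for y
  proof -
    define L where "L u = f (jordan_prod u (ppow y q)) - commutator u (ppow y q)" for u
    have "linear L"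
      by (rule linearI)
        (simp_all add: L_def jordan_prod_def commutator_def linear_add[OF f] linear_scale[OF f]
          algebra_simps)
    moreover have "L (ppow x p) \<in> center" if "x \<in> A" for x
      using box[OF that \<open>y \<in> B\<close>] by (simp add: L_def)
    ultimately have "L (ppow y p) \<in> center"
      by (rule linear_ppow_in_subspace_from_open[OF _ subspace_center A \<open>0 < p\<close>])
    moreover have "L (ppow y p) = 2 *\<^sub>R f (ppow y (p + q))"
      using ppow_add[OF \<open>0 < p\<close> \<open>0 < q\<close>, of y] ppow_add[OF \<open>0 < q\<close> \<open>0 < p\<close>, of y]
      by (simp add: L_def jordan_prod_def commutator_def add.commute scaleR_2 linear_add[OF f])
    ultimately show ?thesis
      using subspace_scaleR_iff[OF subspace_center, of 2] by auto
  qed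
  then show ?thesis
    using linear_ppow_in_subspace_from_open[OF f subspace_center B] \<open>0 < p\<close> by simp
qed

theorem theorem2p4:
  fixes f :: "'a::{real_normed_algebra, banach} \<Rightarrow> 'a"
    and H1 H2 :: "'a set"
  assumes "prime_ring TYPE('a)"
    and "open H1" and "H1 \<noteq> {}"
    and "open H2" and "H2 \<noteq> {}"
    and "ring_automorphism f"
    and "continuous_on UNIV f"
    and "\<forall>x\<in>H1. \<forall>y\<in>H2. \<exists>p q::nat. p > 0 \<and> q > 0 \<and>
           f (jordan_prod (ppow x p) (ppow y q)) - commutator (ppow x p) (ppow y q) \<in> center"
  shows "\<forall>x y::'a. x * y = y * x"
proof -
  have "surj f" and add: "\<And>x y. f (x + y) = f x + f y" and mult: "\<And>x y. f (x * y) = f x * f y"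
    using assms(6) by (auto simp: ring_automorphism_def bij_is_surj)
  have "linear f"
    using add assms(7) by (rule additive_continuous_imp_linear)
  define g where "g = (\<lambda>(p, q) x y.
    f (jordan_prod (ppow x p) (ppow y q)) - commutator (ppow x p) (ppow y q))"
  have cont: "continuous_on UNIV (\<lambda>(x, y). g pq x y)" for pq
    unfolding g_def jordan_prod_def commutator_def case_prod_unfold
    by (intro continuous_intros continuous_on_compose2[OF assms(7)]) auto
  have countable: "countable {(p, q). 0 < (p::nat) \<and> 0 < (q::nat)}"
    by (rule countable_subset[OF subset_UNIV]) simp
  have cover: "\<exists>pq\<in>{(p, q). 0 < p \<and> 0 < q}. g pq x y \<in> center" if "x \<in> H1" "y \<in> H2" for x y
    using assms(8) that by (fastforce simp: g_def)
  obtain pq A a B b where "pq \<in> {(p, q). 0 < p \<and> 0 < q}" "open A" "a \<in> A" "open B" "b \<in> B"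
    and box: "\<And>x y. x \<in> A \<Longrightarrow> y \<in> B \<Longrightarrow> g pq x y \<in> center"
    using Baire_open_box[OF assms(2-5) countable closed_center cont cover] by blast
  then obtain p q where "0 < p" "0 < q" "pq = (p, q)"
    by blast
  have "f (ppow y (p + q)) \<in> center" for y
    using box \<open>pq = (p, q)\<close>
    by (intro ppow_central_from_open_box[OF \<open>linear f\<close> \<open>open A\<close> \<open>a \<in> A\<close> \<open>open B\<close> \<open>b \<in> B\<close>
      \<open>0 < p\<close> \<open>0 < q\<close>]) (simp add: g_def)
  moreover have "ppow (f y) n = f (ppow y n)" for y n
    using multiplicative_ppow[of f, OF mult] by simp
  ultimately have "ppow v (p + q) \<in> center" for v :: 'a
    using surjD[OF \<open>surj f\<close>, of v] by auto
  then show ?thesis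
    using \<open>0 < p\<close> \<open>0 < q\<close>
    by (auto intro: prime_ring_commutative_if_ppow_central[OF assms(1), of "p + q"])
qed

end
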